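(* Let $\mathcal{X},\mathcal{Y}$ be finite alphabets, let $W=W_{Y|X}$ be a channel from $\mathcal{X}$ to $\mathcal{Y}$, and let $\rho\in[1,\infty]$. For $P_0,P_1\in\Delta(\mathcal{X})$ let $Q_i(y)=\sum_{x}P_i(x)W(y|x)$. Then the SDPI coefficient $$\eta_\rho(W)=\sup_{P_0,P_1\in\Delta(\mathcal{X})}\frac{D_\rho(Q_0\|Q_1)}{D_\rho(P_0\|P_1)}$$ is achieved by binary input distributions, i.e., the supremum is unchanged when restricted to pairs $(P_0,P_1)$ supported on a common set of at most two elements of $\mathcal{X}$.
   Context: $\Delta(\mathcal{X})$ is the probability simplex on $\mathcal{X}$. Rényi divergence of order $\rho$: $D_\rho(P\|Q)=\frac{1}{\rho-1}\log\sum_x P(x)^\rho Q(x)^{1-\rho}$, with $D_1=D_{\mathrm{KL}}$ (limit $\rho\to1$) and $D_\infty(P\|Q)=\log\max_x \frac{P(x)}{Q(x)}$. *)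

theory Defs
  imports "HOL-Analysis.Analysis"
begin

definition is_dist :: "('a::finite \<Rightarrow> real) \<Rightarrow> bool" where
  "is_dist P \<longleftrightarrow> (\<forall>x. P x \<ge> 0) \<and> (\<Sum>x\<in>UNIV. P x) = 1"

text \<open>A channel W from 'x to 'y; W x y stands for W(y|x).\<close>
definition is_channel :: "('x::finite \<Rightarrow> 'y::finite \<Rightarrow> real) \<Rightarrow> bool" where
  "is_channel W \<longleftrightarrow> (\<forall>x. is_dist (W x))"

definition out_dist :: "('x::finite \<Rightarrow> 'y::finite \<Rightarrow> real) \<Rightarrow> ('x \<Rightarrow> real) \<Rightarrow> 'y \<Rightarrow> real" where
  "out_dist W P y = (\<Sum>x\<in>UNIV. P x * W x y)"

definition supp :: "('a \<Rightarrow> real) \<Rightarrow> 'a set" where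
  "supp P = {x. P x \<noteq> 0}"

definition renyi_div :: "ereal \<Rightarrow> ('a::finite \<Rightarrow> real) \<Rightarrow> ('a \<Rightarrow> real) \<Rightarrow> ereal" where
  "renyi_div \<rho> P Q =
     (if \<not> supp P \<subseteq> supp Q then \<infinity>
      else if \<rho> = \<infinity> then ereal (ln (Max ((\<lambda>x. P x / Q x) ` supp P)))
      else if \<rho> = 1 then ereal (\<Sum>x\<in>supp P. P x * ln (P x / Q x))
      else ereal (1 / (real_of_ereal \<rho> - 1) *
             ln (\<Sum>x\<in>supp P. P x powr real_of_ereal \<rho> * Q x powr (1 - real_of_ereal \<rho>))))"

definition admissible_pair :: "ereal \<Rightarrow> ('x::finite \<Rightarrow> real) \<Rightarrow> ('x \<Rightarrow> real) \<Rightarrow> bool" where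
  "admissible_pair \<rho> P0 P1 \<longleftrightarrow> is_dist P0 \<and> is_dist P1 \<and>
      0 < renyi_div \<rho> P0 P1 \<and> renyi_div \<rho> P0 P1 < \<infinity>"

definition div_ratio :: "ereal \<Rightarrow> ('x::finite \<Rightarrow> 'y::finite \<Rightarrow> real) \<Rightarrow> ('x \<Rightarrow> real) \<Rightarrow> ('x \<Rightarrow> real) \<Rightarrow> ereal" where
  "div_ratio \<rho> W P0 P1 =
     renyi_div \<rho> (out_dist W P0) (out_dist W P1) / renyi_div \<rho> P0 P1"

definition sdpi_coeff :: "ereal \<Rightarrow> ('x::finite \<Rightarrow> 'y::finite \<Rightarrow> real) \<Rightarrow> ereal" where
  "sdpi_coeff \<rho> W = (SUP (P0, P1) \<in> {(P0, P1). admissible_pair \<rho> P0 P1}. div_ratio \<rho> W P0 P1)"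

end

theory Submission
  imports Defs
begin

text \<open>
  If \<open>P \<ll> Q\<close>, pair every point where \<open>P\<close> exceeds \<open>Q\<close> with every point where \<open>Q\<close>
  exceeds \<open>P\<close>. This writes \<open>P = \<Sum>\<^sub>k w\<^sub>k P\<^sub>k\<close> and \<open>Q = \<Sum>\<^sub>k w\<^sub>k Q\<^sub>k\<close> with common weights,
  where each \<open>(P\<^sub>k, Q\<^sub>k)\<close> lives on at most two points and has the same likelihood
  ratio as \<open>(P, Q)\<close> there. For \<open>\<rho> < \<infinity>\<close> the divergence \<open>D\<^sub>\<rho>\<close> is a monotone function
  of an \<open>f\<close>-divergence, which is therefore exactly affine in this splitting at the
  input and, by joint convexity, only subadditive at the output. Hence if every
  binary pair contracts by the factor \<open>\<eta>\<close>, so does \<open>(P, Q)\<close>: linearly for KL, via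
  concavity of \<open>t \<mapsto> t\<^sup>\<eta>\<close> (\<open>\<eta> \<le> 1\<close>) for \<open>1 < \<rho> < \<infinity>\<close>, and through the
  maximal likelihood ratio, which is the maximum over the components, for \<open>\<rho> = \<infinity>\<close>.
\<close>

definition perspective :: "(real \<Rightarrow> real) \<Rightarrow> real \<Rightarrow> real \<Rightarrow> real" where
  "perspective f a b = (if b = 0 then 0 else b * f (a / b))"

lemma perspective_mult:
  assumes "0 \<le> c"
  shows "perspective f (c * a) (c * b) = c * perspective f a b"
  using assms by (auto simp: perspective_def)

lemma perspective_add_le:
  assumes f: "convex_on {0..} f"
    and "0 \<le> a" "0 \<le> b" "0 \<le> a'" "0 \<le> b'" "b = 0 \<Longrightarrow> a = 0" "b' = 0 \<Longrightarrow> a' = 0"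
  shows "perspective f (a + a') (b + b') \<le> perspective f a b + perspective f a' b'"
proof (cases "b = 0 \<or> b' = 0")
  case True
  then show ?thesis using assms by (auto simp: perspective_def)
next
  case False
  then have b: "0 < b" "0 < b'" using assms by auto
  define u where "u = b / (b + b')"
  have u: "0 \<le> u" "u \<le> 1" "(b + b') * u = b" "(b + b') * (1 - u) = b'"
    using b by (auto simp: u_def field_simps)
  have "(b + b') * ((1 - u) * (a' / b') + u * (a / b)) = a + a'"
    unfolding distrib_left mult.assoc[symmetric] u(3,4) using b by simp
  then have "(a + a') / (b + b') = (1 - u) *\<^sub>R (a' / b') + u *\<^sub>R (a / b)"
    using b by (simp add: divide_eq_eq mult.commute)
  then have "(b + b') * f ((a + a') / (b + b'))
      = (b + b') * f ((1 - u) *\<^sub>R (a' / b') + u *\<^sub>R (a / b))"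
    by simp
  also have "\<dots> \<le> (b + b') * ((1 - u) * f (a' / b') + u * f (a / b))"
    using assms u b by (intro mult_left_mono convex_onD[OF f]) auto
  also have "\<dots> = ((b + b') * (1 - u)) * f (a' / b') + ((b + b') * u) * f (a / b)"
    by (simp only: distrib_left mult.assoc)
  also have "\<dots> = b' * f (a' / b') + b * f (a / b)"
    by (simp only: u)
  finally show ?thesis using b by (simp add: perspective_def)
qed

lemma perspective_sum_le:
  assumes f: "convex_on {0..} f" and "finite K"
    and "\<And>k. k \<in> K \<Longrightarrow> 0 \<le> a k \<and> 0 \<le> b k \<and> (b k = 0 \<longrightarrow> a k = 0)"
  shows "perspective f (\<Sum>k\<in>K. a k) (\<Sum>k\<in>K. b k) \<le> (\<Sum>k\<in>K. perspective f (a k) (b k))"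
  using assms(2,3)
proof (induction K rule: finite_induct)
  case (insert k K)
  have "(\<Sum>k\<in>K. a k) = 0" if "(\<Sum>k\<in>K. b k) = 0"
    using that insert by (simp add: sum_nonneg_eq_0_iff)
  then have "perspective f (a k + (\<Sum>k\<in>K. a k)) (b k + (\<Sum>k\<in>K. b k))
      \<le> perspective f (a k) (b k) + perspective f (\<Sum>k\<in>K. a k) (\<Sum>k\<in>K. b k)"
    using insert.prems by (intro perspective_add_le[OF f]) (auto intro: sum_nonneg)
  then show ?case using insert by simp
qed (simp add: perspective_def)

definition f_div :: "(real \<Rightarrow> real) \<Rightarrow> ('a::finite \<Rightarrow> real) \<Rightarrow> ('a \<Rightarrow> real) \<Rightarrow> real" where
  "f_div f P Q = (\<Sum>x\<in>UNIV. perspective f (P x) (Q x))"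

lemma f_div_mult:
  assumes "0 \<le> c"
  shows "f_div f (\<lambda>x. c * P x) (\<lambda>x. c * Q x) = c * f_div f P Q"
  using assms by (simp add: f_div_def perspective_mult sum_distrib_left)

lemma f_div_sum_le:
  assumes f: "convex_on {0..} f" and "finite K"
    and "\<And>k x. k \<in> K \<Longrightarrow> 0 \<le> P k x \<and> 0 \<le> Q k x \<and> (Q k x = 0 \<longrightarrow> P k x = 0)"
  shows "f_div f (\<lambda>x. \<Sum>k\<in>K. P k x) (\<lambda>x. \<Sum>k\<in>K. Q k x) \<le> (\<Sum>k\<in>K. f_div f (P k) (Q k))"
proof -
  have "f_div f (\<lambda>x. \<Sum>k\<in>K. P k x) (\<lambda>x. \<Sum>k\<in>K. Q k x)
      \<le> (\<Sum>x\<in>UNIV. \<Sum>k\<in>K. perspective f (P k x) (Q k x))"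
    unfolding f_div_def using assms by (intro sum_mono perspective_sum_le) auto
  then show ?thesis by (simp add: f_div_def sum.swap[of _ UNIV])
qed

definition dominated :: "('a::finite \<Rightarrow> real) \<Rightarrow> ('a \<Rightarrow> real) \<Rightarrow> bool" where
  "dominated P Q \<longleftrightarrow> is_dist P \<and> is_dist Q \<and> supp P \<subseteq> supp Q"

lemma dominatedD:
  assumes "dominated P Q"
  shows "0 \<le> P x" "0 \<le> Q x" "Q x = 0 \<Longrightarrow> P x = 0" "sum P UNIV = 1" "sum Q UNIV = 1"
  using assms by (auto simp: dominated_def is_dist_def supp_def)

lemma f_div_ge:
  assumes f: "convex_on {0..} f" and PQ: "dominated P Q"
  shows "f 1 \<le> f_div f P Q"
proof -
  have "perspective f (\<Sum>x\<in>UNIV. P x) (\<Sum>x\<in>UNIV. Q x) \<le> f_div f P Q"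
    unfolding f_div_def using dominatedD[OF PQ] by (intro perspective_sum_le[OF f]) auto
  then show ?thesis using dominatedD[OF PQ] by (simp add: perspective_def)
qed

lemma channel_nonneg: "is_channel W \<Longrightarrow> 0 \<le> W x y"
  by (simp add: is_channel_def is_dist_def)

lemma channel_sum: "is_channel W \<Longrightarrow> (\<Sum>y\<in>UNIV. W x y) = 1"
  by (simp add: is_channel_def is_dist_def)

lemma is_channel_identity: "is_channel (\<lambda>x y. of_bool (x = y))"
  by (simp add: is_channel_def is_dist_def)

lemma out_dist_identity: "out_dist (\<lambda>x y. of_bool (x = y)) P = P"
  by (simp add: out_dist_def fun_eq_iff)

lemma out_dist_nonneg: "is_channel W \<Longrightarrow> (\<And>x. 0 \<le> P x) \<Longrightarrow> 0 \<le> out_dist W P y"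
  unfolding out_dist_def by (auto intro!: sum_nonneg simp: channel_nonneg)

lemma dominated_out_dist:
  assumes W: "is_channel W" and PQ: "dominated P Q"
  shows "dominated (out_dist W P) (out_dist W Q)"
proof -
  have "is_dist (out_dist W F)" if "is_dist F" for F
  proof -
    have "(\<Sum>y\<in>UNIV. out_dist W F y) = (\<Sum>x\<in>UNIV. F x * (\<Sum>y\<in>UNIV. W x y))"
      unfolding out_dist_def by (subst sum.swap) (simp add: sum_distrib_left)
    then show ?thesis
      using that out_dist_nonneg[OF W] by (simp add: channel_sum[OF W] is_dist_def)
  qed
  moreover have "out_dist W P y = 0" if "out_dist W Q y = 0" for y
  proof -
    have "\<forall>x\<in>UNIV. Q x * W x y = 0"
      using that dominatedD[OF PQ] channel_nonneg[OF W] unfolding out_dist_def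
      by (subst sum_nonneg_eq_0_iff[symmetric]) auto
    then show ?thesis
      using dominatedD(3)[OF PQ] unfolding out_dist_def by (intro sum.neutral) auto
  qed
  ultimately show ?thesis using PQ by (auto simp: dominated_def supp_def)
qed

lemma f_div_data_processing:
  assumes f: "convex_on {0..} f" and W: "is_channel W" and PQ: "dominated P Q"
  shows "f_div f (out_dist W P) (out_dist W Q) \<le> f_div f P Q"
proof -
  have "f_div f (out_dist W P) (out_dist W Q)
      \<le> (\<Sum>x\<in>UNIV. f_div f (\<lambda>y. P x * W x y) (\<lambda>y. Q x * W x y))"
    unfolding out_dist_def using dominatedD[OF PQ] channel_nonneg[OF W]
    by (intro f_div_sum_le[OF f, of UNIV "\<lambda>x y. P x * W x y" "\<lambda>x y. Q x * W x y"]) auto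
  also have "\<dots> = (\<Sum>x\<in>UNIV. perspective f (P x) (Q x) * (\<Sum>y\<in>UNIV. W x y))"
    using perspective_mult[OF channel_nonneg[OF W]]
    by (simp add: f_div_def sum_distrib_right mult.commute)
  also have "\<dots> = f_div f P Q"
    by (simp add: channel_sum[OF W] f_div_def)
  finally show ?thesis .
qed

lemma convex_on_atLeast_0I:
  fixes f :: "real \<Rightarrow> real"
  assumes f: "convex_on {0<..} f" and f0: "f 0 = 0"
    and star: "\<And>v y. 0 \<le> v \<Longrightarrow> v \<le> 1 \<Longrightarrow> 0 < y \<Longrightarrow> f (v * y) \<le> v * f y"
  shows "convex_on {0..} f"
proof (rule convex_on_linorderI)
  fix t x y :: real
  assume t: "0 < t" "t < 1" and xy: "x \<in> {0..}" "y \<in> {0..}" "x < y"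
  show "f ((1 - t) *\<^sub>R x + t *\<^sub>R y) \<le> (1 - t) * f x + t * f y"
  proof (cases "x = 0")
    case True
    then show ?thesis using star[of t y] t xy f0 by simp
  next
    case False
    then show ?thesis using convex_onD[OF f, of t x y] t xy by simp
  qed
qed simp

lemma convex_on_xlnx: "convex_on {0..} (\<lambda>t::real. t * ln t)"
proof (rule convex_on_atLeast_0I)
  show "convex_on {0<..} (\<lambda>t::real. t * ln t)"
    by (intro f''_ge0_imp_convex[where f'="\<lambda>t. ln t + 1" and f''="\<lambda>t. 1 / t"]
        derivative_eq_intros | simp)+
next
  fix v y :: real
  assume "0 \<le> v" "v \<le> 1" "0 < y"
  then show "v * y * ln (v * y) \<le> v * (y * ln y)"
    by (cases "v = 0") (simp_all add: ln_mult mult_nonneg_nonpos algebra_simps)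
qed simp

lemma convex_on_powr:
  assumes "1 \<le> r"
  shows "convex_on {0..} (\<lambda>t::real. t powr r)"
proof (rule convex_on_atLeast_0I)
  show "convex_on {0<..} (\<lambda>t::real. t powr r)" using powr_convex[OF assms] .
next
  fix v y :: real
  assume v: "0 \<le> v" "v \<le> 1" and "0 < y"
  have "v powr r \<le> v powr 1" using v assms by (intro powr_mono') auto
  then show "(v * y) powr r \<le> v * y powr r"
    using v \<open>0 < y\<close> by (simp add: powr_mult mult_right_mono)
qed simp

lemma concave_on_powr:
  assumes "0 \<le> c" "c \<le> 1"
  shows "concave_on {0<..} (\<lambda>t::real. t powr c)"
proof (rule f''_le0_imp_concave[where f'="\<lambda>t. c * t powr (c - 1)"
      and f''="\<lambda>t. c * ((c - 1) * t powr (c - 1 - 1))"])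
  fix t :: real
  assume "t \<in> {0<..}"
  then show "((\<lambda>t. t powr c) has_real_derivative c * t powr (c - 1)) (at t)"
    and "((\<lambda>t. c * t powr (c - 1)) has_real_derivative c * ((c - 1) * t powr (c - 1 - 1))) (at t)"
    by (auto intro!: derivative_eq_intros)
  show "c * ((c - 1) * t powr (c - 1 - 1)) \<le> 0"
    using assms by (intro mult_nonneg_nonpos mult_nonpos_nonneg) auto
qed simp

lemma ln_le_mult_ln_iff:
  fixes a b c :: real
  assumes "0 < a" "0 < b"
  shows "ln a \<le> c * ln b \<longleftrightarrow> a \<le> b powr c"
proof -
  have "c * ln b = ln (b powr c)" by simp
  then show ?thesis using assms by (simp del: ln_powr)
qed

lemma one_le_f_div_powr: "1 \<le> r \<Longrightarrow> dominated P Q \<Longrightarrow> 1 \<le> f_div (\<lambda>t. t powr r) P Q"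
  using f_div_ge[OF convex_on_powr] by fastforce

definition max_ratio :: "('a::finite \<Rightarrow> real) \<Rightarrow> ('a \<Rightarrow> real) \<Rightarrow> real" where
  "max_ratio P Q = Max ((\<lambda>x. P x / Q x) ` supp P)"

lemma supp_nonempty:
  assumes "is_dist P"
  shows "supp P \<noteq> {}"
proof
  assume "supp P = {}"
  then have "sum P UNIV = 0" by (simp add: supp_def)
  with assms show False by (simp add: is_dist_def)
qed

lemma ratio_le_max_ratio: "x \<in> supp P \<Longrightarrow> P x / Q x \<le> max_ratio P Q"
  unfolding max_ratio_def by (intro Max_ge) auto

lemma le_max_ratio_mult:
  assumes PQ: "dominated P Q"
  shows "P x \<le> max_ratio P Q * Q x"
proof (cases "x \<in> supp P")
  case True
  then have "0 < Q x" using dominatedD[OF PQ] by (auto simp: supp_def less_le)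
  then show ?thesis using ratio_le_max_ratio[OF True, of Q] by (simp add: pos_divide_le_eq)
next
  case False
  obtain z where z: "z \<in> supp P" using PQ supp_nonempty by (auto simp: dominated_def)
  have "0 \<le> max_ratio P Q"
    using ratio_le_max_ratio[OF z] dominatedD[OF PQ] by (meson divide_nonneg_nonneg order_trans)
  then show ?thesis using False dominatedD[OF PQ] by (simp add: supp_def)
qed

lemma max_ratio_le:
  assumes PQ: "dominated P Q" and R: "\<And>x. P x \<le> R * Q x"
  shows "max_ratio P Q \<le> R"
  unfolding max_ratio_def
proof (rule Max.boundedI)
  show "(\<lambda>x. P x / Q x) ` supp P \<noteq> {}" using PQ supp_nonempty by (auto simp: dominated_def)
next
  fix a
  assume "a \<in> (\<lambda>x. P x / Q x) ` supp P"
  then obtain x where x: "x \<in> supp P" "a = P x / Q x" by auto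
  then have "0 < Q x" using dominatedD[OF PQ] by (auto simp: supp_def less_le)
  then show "a \<le> R" using x R[of x] by (simp add: pos_divide_le_eq)
qed simp

lemma one_le_max_ratio:
  assumes PQ: "dominated P Q"
  shows "1 \<le> max_ratio P Q"
proof -
  have "(\<Sum>x\<in>UNIV. P x) \<le> (\<Sum>x\<in>UNIV. max_ratio P Q * Q x)"
    by (intro sum_mono le_max_ratio_mult[OF PQ])
  then show ?thesis using dominatedD[OF PQ] by (simp add: sum_distrib_left[symmetric])
qed

definition renyi_real :: "ereal \<Rightarrow> ('a::finite \<Rightarrow> real) \<Rightarrow> ('a \<Rightarrow> real) \<Rightarrow> real" where
  "renyi_real \<rho> P Q =
     (if \<rho> = \<infinity> then ln (max_ratio P Q)
      else if \<rho> = 1 then f_div (\<lambda>t. t * ln t) P Q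
      else ln (f_div (\<lambda>t. t powr real_of_ereal \<rho>) P Q) / (real_of_ereal \<rho> - 1))"

lemma renyi_order_cases [consumes 1, case_names infinity KL finite]:
  assumes "1 \<le> \<rho>"
  obtains "\<rho> = \<infinity>" | "\<rho> = 1" | r where "\<rho> = ereal r" "1 < r"
  using assms by (cases \<rho>) force+

lemma renyi_real_finite:
  "1 < r \<Longrightarrow> renyi_real (ereal r) P Q = ln (f_div (\<lambda>t. t powr r) P Q) / (r - 1)"
  by (simp add: renyi_real_def)

lemma f_div_eq_sum_supp:
  "f 0 = 0 \<Longrightarrow> f_div f P Q = (\<Sum>x\<in>supp P. perspective f (P x) (Q x))"
  unfolding f_div_def by (rule sum.mono_neutral_right) (auto simp: supp_def perspective_def)

lemma renyi_div_eq_renyi_real: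
  assumes PQ: "dominated P Q"
  shows "renyi_div \<rho> P Q = ereal (renyi_real \<rho> P Q)"
proof -
  have Q: "0 < Q x" if "x \<in> supp P" for x
    using that dominatedD[OF PQ] by (auto simp: supp_def less_le)
  have "f_div (\<lambda>t. t * ln t) P Q = (\<Sum>x\<in>supp P. P x * ln (P x / Q x))"
    using Q by (auto simp: f_div_eq_sum_supp perspective_def intro!: sum.cong)
  moreover have "f_div (\<lambda>t. t powr r) P Q = (\<Sum>x\<in>supp P. P x powr r * Q x powr (1 - r))" for r
    using Q dominatedD(1,2)[OF PQ]
    by (auto simp: f_div_eq_sum_supp perspective_def powr_divide powr_diff intro!: sum.cong)
  ultimately show ?thesis
    using PQ by (simp add: renyi_div_def renyi_real_def max_ratio_def dominated_def)
qed

lemma renyi_real_nonneg: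
  assumes PQ: "dominated P Q" and "1 \<le> \<rho>"
  shows "0 \<le> renyi_real \<rho> P Q"
  using assms(2)
proof (cases rule: renyi_order_cases)
  case infinity
  then show ?thesis using one_le_max_ratio[OF PQ] by (simp add: renyi_real_def)
next
  case KL
  then show ?thesis using f_div_ge[OF convex_on_xlnx PQ] by (simp add: renyi_real_def)
next
  case (finite r)
  then show ?thesis using one_le_f_div_powr[OF _ PQ, of r] by (simp add: renyi_real_finite)
qed

lemma renyi_real_data_processing:
  assumes W: "is_channel W" and PQ: "dominated P Q" and "1 \<le> \<rho>"
  shows "renyi_real \<rho> (out_dist W P) (out_dist W Q) \<le> renyi_real \<rho> P Q"
  using assms(3)
proof (cases rule: renyi_order_cases)
  case infinity
  have out: "dominated (out_dist W P) (out_dist W Q)" by (rule dominated_out_dist[OF W PQ])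
  have "out_dist W P y \<le> max_ratio P Q * out_dist W Q y" for y
  proof -
    have "out_dist W P y \<le> (\<Sum>x\<in>UNIV. (max_ratio P Q * Q x) * W x y)"
      unfolding out_dist_def using le_max_ratio_mult[OF PQ] channel_nonneg[OF W]
      by (intro sum_mono mult_right_mono) auto
    then show ?thesis by (simp add: out_dist_def sum_distrib_left mult.assoc)
  qed
  then have "max_ratio (out_dist W P) (out_dist W Q) \<le> max_ratio P Q"
    by (rule max_ratio_le[OF out])
  then show ?thesis using infinity one_le_max_ratio[OF out] by (simp add: renyi_real_def)
next
  case KL
  then show ?thesis using f_div_data_processing[OF convex_on_xlnx W PQ] by (simp add: renyi_real_def)
next
  case (finite r)
  have "f_div (\<lambda>t. t powr r) (out_dist W P) (out_dist W Q) \<le> f_div (\<lambda>t. t powr r) P Q"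
    using f_div_data_processing[OF convex_on_powr W PQ] finite by simp
  moreover have "1 \<le> f_div (\<lambda>t. t powr r) (out_dist W P) (out_dist W Q)"
    using one_le_f_div_powr[OF _ dominated_out_dist[OF W PQ], of r] finite by simp
  ultimately show ?thesis using finite by (simp add: renyi_real_finite divide_right_mono)
qed

definition binary_pair :: "('a::finite \<Rightarrow> real) \<Rightarrow> ('a \<Rightarrow> real) \<Rightarrow> bool" where
  "binary_pair P Q \<longleftrightarrow> dominated P Q \<and> (\<exists>S. card S \<le> 2 \<and> supp P \<subseteq> S \<and> supp Q \<subseteq> S)"

text \<open>
  Cutting \<open>P\<close> and \<open>Q\<close> with the same piece keeps
  their likelihood ratio, and \<open>cf_balanced\<close> makes both pieces carry the same mass, so
  they renormalise with the common weight \<open>weight k\<close>.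
\<close>
locale binary_mixture =
  fixes P Q :: "'a::finite \<Rightarrow> real" and K :: "'k set" and cf :: "'k \<Rightarrow> 'a \<Rightarrow> real"
  assumes dominated: "dominated P Q"
    and finite_K: "finite K"
    and cf_nonneg: "k \<in> K \<Longrightarrow> 0 \<le> cf k x"
    and sum_cf: "(\<Sum>k\<in>K. cf k x) = 1"
    and cf_balanced: "k \<in> K \<Longrightarrow> (\<Sum>x\<in>UNIV. P x * cf k x) = (\<Sum>x\<in>UNIV. Q x * cf k x)"
    and cf_binary: "k \<in> K \<Longrightarrow> \<exists>S. card S \<le> 2 \<and> {x. cf k x \<noteq> 0} \<subseteq> S"
begin

definition weight :: "'k \<Rightarrow> real" where
  "weight k = (\<Sum>x\<in>UNIV. Q x * cf k x)"

definition component :: "('a \<Rightarrow> real) \<Rightarrow> 'k \<Rightarrow> 'a \<Rightarrow> real" where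
  "component F k x = F x * cf k x / weight k"

lemma weight_nonneg: "k \<in> K \<Longrightarrow> 0 \<le> weight k"
  unfolding weight_def using dominatedD[OF dominated] cf_nonneg by (auto intro!: sum_nonneg)

lemma sum_weight: "(\<Sum>k\<in>K. weight k) = 1"
  unfolding weight_def using dominatedD[OF dominated]
  by (subst sum.swap) (simp add: sum_distrib_left[symmetric] sum_cf)

lemma component_nonneg: "k \<in> K \<Longrightarrow> (\<And>x. 0 \<le> F x) \<Longrightarrow> 0 \<le> component F k x"
  unfolding component_def using cf_nonneg weight_nonneg by simp

lemma weight_mult_component:
  assumes k: "k \<in> K" and F: "supp F \<subseteq> supp Q"
  shows "weight k * component F k x = F x * cf k x"
proof (cases "weight k = 0")
  case True
  then have "\<forall>x\<in>UNIV. Q x * cf k x = 0"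
    unfolding weight_def using dominatedD[OF dominated] cf_nonneg[OF k]
    by (subst sum_nonneg_eq_0_iff[symmetric]) auto
  then show ?thesis using True F by (auto simp: supp_def)
qed (simp add: component_def)

lemma sum_weight_component:
  assumes "supp F \<subseteq> supp Q"
  shows "(\<Sum>k\<in>K. weight k * component F k x) = F x"
  using weight_mult_component[OF _ assms] by (simp add: sum_distrib_left[symmetric] sum_cf)

lemma binary_pair_component:
  assumes k: "k \<in> K" and w: "0 < weight k"
  shows "binary_pair (component P k) (component Q k)"
proof -
  have "is_dist (component F k)" if "\<And>x. 0 \<le> F x" "(\<Sum>x\<in>UNIV. F x * cf k x) = weight k" for F
    using that w cf_nonneg[OF k]
    by (simp add: is_dist_def component_def sum_divide_distrib[symmetric])
  then have "is_dist (component P k)" "is_dist (component Q k)"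
    using dominatedD[OF dominated] cf_balanced[OF k] by (auto simp: weight_def)
  moreover have "supp (component P k) \<subseteq> supp (component Q k)"
    using dominatedD(3)[OF dominated] by (auto simp: supp_def component_def)
  moreover obtain S where "card S \<le> 2" "{x. cf k x \<noteq> 0} \<subseteq> S" using cf_binary[OF k] by blast
  then have "card S \<le> 2 \<and> supp (component P k) \<subseteq> S \<and> supp (component Q k) \<subseteq> S"
    by (auto simp: supp_def component_def)
  ultimately show ?thesis by (auto simp: binary_pair_def dominated_def)
qed

lemma dominated_component:
  "k \<in> K \<Longrightarrow> 0 < weight k \<Longrightarrow> dominated (component P k) (component Q k)"
  using binary_pair_component by (simp add: binary_pair_def)

lemma f_div_eq_mixture:
  "f_div f P Q = (\<Sum>k\<in>K. weight k * f_div f (component P k) (component Q k))"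
proof -
  have "weight k * f_div f (component P k) (component Q k)
      = (\<Sum>x\<in>UNIV. cf k x * perspective f (P x) (Q x))" if k: "k \<in> K" for k
    using weight_nonneg[OF k] cf_nonneg[OF k] dominated
    by (simp add: f_div_def sum_distrib_left perspective_mult[symmetric] weight_mult_component[OF k]
        dominated_def mult.commute[of _ "cf k _"])
  then have "(\<Sum>k\<in>K. weight k * f_div f (component P k) (component Q k))
      = (\<Sum>x\<in>UNIV. (\<Sum>k\<in>K. cf k x) * perspective f (P x) (Q x))"
    by (simp add: sum.swap[of _ K] sum_distrib_right)
  then show ?thesis by (simp add: sum_cf f_div_def)
qed

lemma out_dist_eq_mixture:
  assumes "supp F \<subseteq> supp Q"
  shows "out_dist W F = (\<lambda>y. \<Sum>k\<in>K. weight k * out_dist W (component F k) y)"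
  unfolding out_dist_def
  by (rule ext)
    (simp add: sum_weight_component[OF assms, symmetric] sum_distrib_left sum_distrib_right
      sum.swap[of _ K] mult.assoc)

lemma f_div_out_le_mixture:
  assumes f: "convex_on {0..} f" and W: "is_channel W"
  shows "f_div f (out_dist W P) (out_dist W Q)
    \<le> (\<Sum>k\<in>K. weight k * f_div f (out_dist W (component P k)) (out_dist W (component Q k)))"
proof -
  have "f_div f (out_dist W P) (out_dist W Q)
      = f_div f (\<lambda>y. \<Sum>k\<in>K. weight k * out_dist W (component P k) y)
                (\<lambda>y. \<Sum>k\<in>K. weight k * out_dist W (component Q k) y)"
    using dominated by (simp add: out_dist_eq_mixture dominated_def)
  also have "\<dots> \<le> (\<Sum>k\<in>K. f_div f (\<lambda>y. weight k * out_dist W (component P k) y)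
                               (\<lambda>y. weight k * out_dist W (component Q k) y))"
  proof (intro f_div_sum_le[OF f finite_K] conjI impI)
    fix k y
    assume k: "k \<in> K"
    have PQ: "dominated (out_dist W (component P k)) (out_dist W (component Q k))"
      if "0 < weight k"
      using dominated_component[OF k that] by (rule dominated_out_dist[OF W])
    show "0 \<le> weight k * out_dist W (component P k) y" "0 \<le> weight k * out_dist W (component Q k) y"
      using k dominatedD[OF dominated]
      by (auto intro!: mult_nonneg_nonneg weight_nonneg out_dist_nonneg[OF W] component_nonneg)
    show "weight k * out_dist W (component P k) y = 0"
      if "weight k * out_dist W (component Q k) y = 0"
      using that PQ dominatedD(3) weight_nonneg[OF k] by (cases "weight k = 0") auto
  qed
  also have "\<dots> = (\<Sum>k\<in>K. weight k * f_div f (out_dist W (component P k)) (out_dist W (component Q k)))"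
    using weight_nonneg by (simp add: f_div_mult)
  finally show ?thesis .
qed

lemma sum_weight_mono:
  assumes "\<And>k. k \<in> K \<Longrightarrow> 0 < weight k \<Longrightarrow> a k \<le> b k"
  shows "(\<Sum>k\<in>K. weight k * a k) \<le> (\<Sum>k\<in>K. weight k * b k)"
proof (rule sum_mono)
  fix k
  assume k: "k \<in> K"
  show "weight k * a k \<le> weight k * b k"
    using weight_nonneg[OF k] assms[OF k] by (cases "weight k = 0") (auto intro: mult_left_mono)
qed

lemma sum_weight_concave_le:
  assumes g: "concave_on {0<..} g" and pos: "\<And>k. k \<in> K \<Longrightarrow> 0 < weight k \<Longrightarrow> 0 < a k"
  shows "(\<Sum>k\<in>K. weight k * g (a k)) \<le> g (\<Sum>k\<in>K. weight k * a k)"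
proof -
  define K' where "K' = {k \<in> K. 0 < weight k}"
  have restrict: "(\<Sum>k\<in>K. weight k * h k) = (\<Sum>k\<in>K'. weight k * h k)" for h
    using finite_K weight_nonneg by (intro sum.mono_neutral_right) (auto simp: K'_def less_le)
  have K': "(\<Sum>k\<in>K'. weight k) = 1" using restrict[of "\<lambda>_. 1"] sum_weight by simp
  then have "K' \<noteq> {}" by auto
  then have "(\<Sum>k\<in>K'. weight k * g (a k)) \<le> g (\<Sum>k\<in>K'. weight k *\<^sub>R a k)"
    using K' finite_K pos by (intro concave_on_sum[OF _ _ g]) (auto simp: K'_def)
  then show ?thesis by (simp add: restrict)
qed

lemma max_ratio_component_le:
  assumes k: "k \<in> K" and w: "0 < weight k"
  shows "max_ratio (component P k) (component Q k) \<le> max_ratio P Q"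
proof (rule max_ratio_le)
  show "dominated (component P k) (component Q k)" by (rule dominated_component[OF k w])
  fix x
  have "P x * cf k x \<le> (max_ratio P Q * Q x) * cf k x"
    using le_max_ratio_mult[OF dominated] cf_nonneg[OF k] by (intro mult_right_mono)
  then show "component P k x \<le> max_ratio P Q * component Q k x"
    using w by (simp add: component_def divide_right_mono mult.assoc)
qed

lemma f_div_out_le_of_components:
  assumes f: "convex_on {0..} f" and W: "is_channel W" and c: "0 \<le> c"
    and comp: "\<And>k. k \<in> K \<Longrightarrow> 0 < weight k \<Longrightarrow>
      f_div f (out_dist W (component P k)) (out_dist W (component Q k))
        \<le> c * f_div f (component P k) (component Q k)"
  shows "f_div f (out_dist W P) (out_dist W Q) \<le> c * f_div f P Q"
proof -
  have "f_div f (out_dist W P) (out_dist W Q)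
      \<le> (\<Sum>k\<in>K. weight k * f_div f (out_dist W (component P k)) (out_dist W (component Q k)))"
    by (rule f_div_out_le_mixture[OF f W])
  also have "\<dots> \<le> (\<Sum>k\<in>K. weight k * (c * f_div f (component P k) (component Q k)))"
    using comp by (rule sum_weight_mono)
  also have "\<dots> = c * f_div f P Q"
    by (simp add: f_div_eq_mixture[of f] sum_distrib_left mult.left_commute)
  finally show ?thesis .
qed

lemma max_ratio_out_le_of_components:
  assumes W: "is_channel W" and c: "0 \<le> c"
    and comp: "\<And>k. k \<in> K \<Longrightarrow> 0 < weight k \<Longrightarrow>
      max_ratio (out_dist W (component P k)) (out_dist W (component Q k))
        \<le> max_ratio (component P k) (component Q k) powr c"
  shows "max_ratio (out_dist W P) (out_dist W Q) \<le> max_ratio P Q powr c"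
proof (rule max_ratio_le[OF dominated_out_dist[OF W dominated]])
  let ?M = "max_ratio P Q powr c"
  have out_comp: "out_dist W (component P k) y \<le> ?M * out_dist W (component Q k) y"
    if k: "k \<in> K" and w: "0 < weight k" for k y
  proof -
    have PQ: "dominated (component P k) (component Q k)" by (rule dominated_component[OF k w])
    have out: "dominated (out_dist W (component P k)) (out_dist W (component Q k))"
      by (rule dominated_out_dist[OF W PQ])
    have "max_ratio (out_dist W (component P k)) (out_dist W (component Q k))
        \<le> max_ratio (component P k) (component Q k) powr c"
      by (rule comp[OF k w])
    also have "\<dots> \<le> ?M"
      using max_ratio_component_le[OF k w] one_le_max_ratio[OF PQ] c by (simp add: powr_mono2)
    finally show ?thesis
      using le_max_ratio_mult[OF out, of y] dominatedD(2)[OF out, of y]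
      by (meson mult_right_mono order_trans)
  qed
  fix y
  have "out_dist W P y \<le> (\<Sum>k\<in>K. weight k * (?M * out_dist W (component Q k) y))"
    using dominated out_comp by (simp add: out_dist_eq_mixture[of P] dominated_def sum_weight_mono)
  also have "\<dots> = ?M * out_dist W Q y"
    by (simp add: out_dist_eq_mixture[of Q] sum_distrib_left mult.left_commute)
  finally show "out_dist W P y \<le> ?M * out_dist W Q y" .
qed

lemma f_div_powr_out_le_of_components:
  assumes W: "is_channel W" and r: "1 \<le> r" and c: "0 \<le> c" "c \<le> 1"
    and comp: "\<And>k. k \<in> K \<Longrightarrow> 0 < weight k \<Longrightarrow>
      f_div (\<lambda>t. t powr r) (out_dist W (component P k)) (out_dist W (component Q k))
        \<le> f_div (\<lambda>t. t powr r) (component P k) (component Q k) powr c"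
  shows "f_div (\<lambda>t. t powr r) (out_dist W P) (out_dist W Q) \<le> f_div (\<lambda>t. t powr r) P Q powr c"
proof -
  let ?G = "f_div (\<lambda>t. t powr r)"
  have "?G (out_dist W P) (out_dist W Q)
      \<le> (\<Sum>k\<in>K. weight k * ?G (out_dist W (component P k)) (out_dist W (component Q k)))"
    by (rule f_div_out_le_mixture[OF convex_on_powr[OF r] W])
  also have "\<dots> \<le> (\<Sum>k\<in>K. weight k * ?G (component P k) (component Q k) powr c)"
    using comp by (rule sum_weight_mono)
  also have "\<dots> \<le> (\<Sum>k\<in>K. weight k * ?G (component P k) (component Q k)) powr c"
    using c one_le_f_div_powr[OF r dominated_component]
    by (intro sum_weight_concave_le concave_on_powr) (auto intro: less_le_trans[OF zero_less_one])
  also have "\<dots> = ?G P Q powr c"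
    by (simp add: f_div_eq_mixture[symmetric])
  finally show ?thesis .
qed

lemma ln_f_div_powr_out_le_of_components:
  assumes W: "is_channel W" and r: "1 \<le> r" and c: "0 \<le> c"
    and comp: "\<And>k. k \<in> K \<Longrightarrow> 0 < weight k \<Longrightarrow>
      ln (f_div (\<lambda>t. t powr r) (out_dist W (component P k)) (out_dist W (component Q k)))
        \<le> c * ln (f_div (\<lambda>t. t powr r) (component P k) (component Q k))"
  shows "ln (f_div (\<lambda>t. t powr r) (out_dist W P) (out_dist W Q))
    \<le> c * ln (f_div (\<lambda>t. t powr r) P Q)"
proof -
  let ?G = "f_div (\<lambda>t. t powr r)"
  note G_ge = one_le_f_div_powr[OF r]
  have out: "dominated (out_dist W P) (out_dist W Q)" by (rule dominated_out_dist[OF W dominated])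
  show ?thesis
  proof (cases "1 \<le> c")
    case True
    have "ln (?G (out_dist W P) (out_dist W Q)) \<le> ln (?G P Q)"
      using f_div_data_processing[OF convex_on_powr[OF r] W dominated] G_ge[OF out] by simp
    also have "\<dots> \<le> c * ln (?G P Q)"
      using True G_ge[OF dominated] by (simp add: mult_le_cancel_right1)
    finally show ?thesis .
  next
    case False
    have "?G (out_dist W P) (out_dist W Q) \<le> ?G P Q powr c"
    proof (rule f_div_powr_out_le_of_components[OF W r c])
      fix k
      assume k: "k \<in> K" and w: "0 < weight k"
      have PQ: "dominated (component P k) (component Q k)" by (rule dominated_component[OF k w])
      show "?G (out_dist W (component P k)) (out_dist W (component Q k))
          \<le> ?G (component P k) (component Q k) powr c"
        using comp[OF k w] G_ge[OF PQ] G_ge[OF dominated_out_dist[OF W PQ]]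
        by (simp add: ln_le_mult_ln_iff)
    qed (use False in simp)
    then show ?thesis
      using G_ge[OF out] G_ge[OF dominated] by (simp add: ln_le_mult_ln_iff)
  qed
qed

lemma renyi_real_out_le_of_components:
  assumes W: "is_channel W" and "1 \<le> \<rho>" and c: "0 \<le> c"
    and comp: "\<And>k. k \<in> K \<Longrightarrow> 0 < weight k \<Longrightarrow>
      renyi_real \<rho> (out_dist W (component P k)) (out_dist W (component Q k))
        \<le> c * renyi_real \<rho> (component P k) (component Q k)"
  shows "renyi_real \<rho> (out_dist W P) (out_dist W Q) \<le> c * renyi_real \<rho> P Q"
  using assms(2)
proof (cases rule: renyi_order_cases)
  case infinity
  note ratio_ge = one_le_max_ratio one_le_max_ratio[OF dominated_out_dist[OF W]]
  have "max_ratio (out_dist W P) (out_dist W Q) \<le> max_ratio P Q powr c"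
  proof (rule max_ratio_out_le_of_components[OF W c])
    fix k
    assume k: "k \<in> K" and w: "0 < weight k"
    then show "max_ratio (out_dist W (component P k)) (out_dist W (component Q k))
        \<le> max_ratio (component P k) (component Q k) powr c"
      using comp[OF k w] infinity ratio_ge[OF dominated_component[OF k w]]
      by (simp add: renyi_real_def ln_le_mult_ln_iff)
  qed
  then show ?thesis
    using infinity ratio_ge[OF dominated] by (simp add: renyi_real_def ln_le_mult_ln_iff)
next
  case KL
  then show ?thesis
    using f_div_out_le_of_components[OF convex_on_xlnx W c] comp by (simp add: renyi_real_def)
next
  case (finite r)
  have "ln (f_div (\<lambda>t. t powr r) (out_dist W P) (out_dist W Q))
      \<le> c * ln (f_div (\<lambda>t. t powr r) P Q)"
    using finite comp
    by (intro ln_f_div_powr_out_le_of_components[OF W _ c])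
      (auto simp: renyi_real_finite divide_le_cancel)
  then show ?thesis
    using finite by (simp add: renyi_real_finite divide_right_mono)
qed

end

definition excess :: "('a::finite \<Rightarrow> real) \<Rightarrow> ('a \<Rightarrow> real) \<Rightarrow> real" where
  "excess P Q = (\<Sum>x | Q x < P x. P x - Q x)"

definition pairing_index :: "('a::finite \<Rightarrow> real) \<Rightarrow> ('a \<Rightarrow> real) \<Rightarrow> ('a \<times> 'a) set" where
  "pairing_index P Q = {a. Q a < P a} \<times> {b. P b < Q b} \<union> (\<lambda>c. (c, c)) ` {c. P c = Q c}"

text \<open>
  For \<open>P a > Q a\<close> and \<open>P b < Q b\<close> the piece \<open>(a, b)\<close> takes the fractions proportional to
  \<open>Q b - P b\<close> of \<open>a\<close> and \<open>P a - Q a\<close> of \<open>b\<close>, so that \<open>P\<close> and \<open>Q\<close> give it the same mass;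
  points with \<open>P c = Q c\<close> form pieces of their own.
\<close>
definition pairing_cf :: "('a::finite \<Rightarrow> real) \<Rightarrow> ('a \<Rightarrow> real) \<Rightarrow> 'a \<times> 'a \<Rightarrow> 'a \<Rightarrow> real" where
  "pairing_cf P Q k x =
     (if fst k = snd k then of_bool (x = fst k)
      else (of_bool (x = fst k) * (Q (snd k) - P (snd k))
          + of_bool (x = snd k) * (P (fst k) - Q (fst k))) / excess P Q)"

lemma excess_eq_deficit:
  assumes "is_dist P" "is_dist Q"
  shows "(\<Sum>x | P x < Q x. Q x - P x) = excess P Q"
proof -
  let ?A = "{x. Q x < P x}" and ?B = "{x. P x < Q x}"
  have "(\<Sum>x\<in>UNIV. P x - Q x) = (\<Sum>x\<in>?A \<union> ?B. P x - Q x)"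
    by (intro sum.mono_neutral_right) auto
  also have "\<dots> = (\<Sum>x\<in>?A. P x - Q x) + (\<Sum>x\<in>?B. P x - Q x)"
    by (intro sum.union_disjoint) auto
  finally have "(\<Sum>x\<in>UNIV. P x - Q x) = \<dots>" .
  moreover have "(\<Sum>x\<in>?B. P x - Q x) = - (\<Sum>x\<in>?B. Q x - P x)" by (simp add: sum_subtractf)
  moreover have "(\<Sum>x\<in>UNIV. P x - Q x) = 0" using assms by (simp add: is_dist_def sum_subtractf)
  ultimately show ?thesis by (simp add: excess_def)
qed

lemma sum_pairing_cf:
  assumes PQ: "is_dist P" "is_dist Q"
  shows "(\<Sum>k\<in>pairing_index P Q. pairing_cf P Q k x) = 1"
proof -
  let ?A = "{a. Q a < P a}" and ?B = "{b. P b < Q b}" and ?C = "{c. P c = Q c}"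
  have A: "0 < excess P Q" if "x \<in> ?A"
    unfolding excess_def using that by (intro sum_pos2[of _ x]) auto
  have B: "0 < excess P Q" if "x \<in> ?B"
    unfolding excess_eq_deficit[OF PQ, symmetric] using that by (intro sum_pos2[of _ x]) auto
  have "(\<Sum>k\<in>?A \<times> ?B. pairing_cf P Q k x)
      = (\<Sum>a\<in>?A. \<Sum>b\<in>?B. (of_bool (x = a) * (Q b - P b)
          + of_bool (x = b) * (P a - Q a)) / excess P Q)"
    unfolding sum.cartesian_product by (intro sum.cong) (auto simp: pairing_cf_def)
  also have "\<dots> = ((if x \<in> ?A then (\<Sum>b\<in>?B. Q b - P b) else 0)
      + (if x \<in> ?B then (\<Sum>a\<in>?A. P a - Q a) else 0)) / excess P Q"
    by (simp add: sum.distrib sum_divide_distrib[symmetric] sum_distrib_left[symmetric]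
        sum_distrib_right[symmetric])
  also have "\<dots> = (if x \<in> ?A then 1 else 0) + (if x \<in> ?B then 1 else 0)"
    using A B excess_eq_deficit[OF PQ]
    by (cases "x \<in> ?A \<union> ?B") (auto simp: excess_def add_divide_distrib)
  finally have "(\<Sum>k\<in>?A \<times> ?B. pairing_cf P Q k x) = \<dots>" .
  moreover have "(\<Sum>k\<in>(\<lambda>c. (c, c)) ` ?C. pairing_cf P Q k x) = (if x \<in> ?C then 1 else 0)"
    by (subst sum.reindex) (auto simp: inj_on_def pairing_cf_def)
  ultimately show ?thesis
    unfolding pairing_index_def by (subst sum.union_disjoint) (auto simp: not_less)
qed

lemma pairing_cf_balanced:
  assumes "k \<in> pairing_index P Q"
  shows "(\<Sum>x\<in>UNIV. P x * pairing_cf P Q k x) = (\<Sum>x\<in>UNIV. Q x * pairing_cf P Q k x)"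
proof -
  obtain a b where k: "k = (a, b)" by fastforce
  show ?thesis
  proof (cases "a = b")
    case True
    then show ?thesis using assms by (auto simp: k pairing_index_def pairing_cf_def)
  next
    case False
    have "(\<Sum>x\<in>UNIV. F x * pairing_cf P Q k x) = (F a * (Q b - P b) + F b * (P a - Q a)) / excess P Q"
      for F :: "'a \<Rightarrow> real"
      using False by (simp add: k pairing_cf_def sum.distrib sum_divide_distrib[symmetric]
          distrib_left mult.left_commute[of "F _"])
    then show ?thesis by (simp add: algebra_simps)
  qed
qed

lemma binary_mixture_pairing:
  assumes PQ: "dominated P Q"
  shows "binary_mixture P Q (pairing_index P Q) (pairing_cf P Q)"
proof
  have "0 \<le> excess P Q" unfolding excess_def by (intro sum_nonneg) auto
  then show "0 \<le> pairing_cf P Q k x" if "k \<in> pairing_index P Q" for k x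
    using that by (auto simp: pairing_index_def pairing_cf_def)
  show "(\<Sum>k\<in>pairing_index P Q. pairing_cf P Q k x) = 1" for x
    using PQ by (simp add: sum_pairing_cf dominated_def)
  show "\<exists>S. card S \<le> 2 \<and> {x. pairing_cf P Q k x \<noteq> 0} \<subseteq> S" for k
    by (intro exI[of _ "{fst k, snd k}"]) (auto simp: card_insert_if pairing_cf_def)
qed (simp_all add: PQ pairing_cf_balanced)

lemma renyi_real_out_le_of_binary:
  assumes W: "is_channel W" and \<rho>: "1 \<le> \<rho>" and c: "0 \<le> c"
    and binary: "\<And>P' Q'. binary_pair P' Q' \<Longrightarrow> 0 < renyi_real \<rho> P' Q' \<Longrightarrow>
      renyi_real \<rho> (out_dist W P') (out_dist W Q') \<le> c * renyi_real \<rho> P' Q'"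
    and PQ: "dominated P Q"
  shows "renyi_real \<rho> (out_dist W P) (out_dist W Q) \<le> c * renyi_real \<rho> P Q"
proof -
  interpret binary_mixture P Q "pairing_index P Q" "pairing_cf P Q"
    by (rule binary_mixture_pairing[OF PQ])
  show ?thesis
  proof (rule renyi_real_out_le_of_components[OF W \<rho> c])
    fix k
    assume k: "k \<in> pairing_index P Q" and w: "0 < weight k"
    have PQk: "dominated (component P k) (component Q k)" by (rule dominated_component[OF k w])
    show "renyi_real \<rho> (out_dist W (component P k)) (out_dist W (component Q k))
        \<le> c * renyi_real \<rho> (component P k) (component Q k)"
    proof (cases "0 < renyi_real \<rho> (component P k) (component Q k)")
      case True
      then show ?thesis using binary binary_pair_component[OF k w] by blast
    next
      case False
      then show ?thesis
        using renyi_real_nonneg[OF PQk \<rho>] renyi_real_data_processing[OF W PQk \<rho>] by simp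
    qed
  qed
qed

lemma exists_binary_pair_renyi_pos:
  fixes P Q :: "'a::finite \<Rightarrow> real"
  assumes PQ: "dominated P Q" and \<rho>: "1 \<le> \<rho>" and pos: "0 < renyi_real \<rho> P Q"
  shows "\<exists>P' Q' :: 'a \<Rightarrow> real. binary_pair P' Q' \<and> 0 < renyi_real \<rho> P' Q'"
proof (rule ccontr)
  txt \<open>Otherwise the hypothesis about binary pairs holds vacuously for the identity
    channel and \<open>c = 0\<close>.\<close>
  assume "\<nexists>P' Q' :: 'a \<Rightarrow> real. binary_pair P' Q' \<and> 0 < renyi_real \<rho> P' Q'"
  then have "renyi_real \<rho> (out_dist (\<lambda>x y. of_bool (x = y)) P)
      (out_dist (\<lambda>x y. of_bool (x = y)) Q) \<le> 0 * renyi_real \<rho> P Q"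
    by (intro renyi_real_out_le_of_binary[OF is_channel_identity \<rho> _ _ PQ]) auto
  then show False using pos by (simp add: out_dist_identity)
qed

lemma admissible_pair_iff: "admissible_pair \<rho> P Q \<longleftrightarrow> dominated P Q \<and> 0 < renyi_real \<rho> P Q"
proof
  assume adm: "admissible_pair \<rho> P Q"
  then have "supp P \<subseteq> supp Q" by (auto simp: admissible_pair_def renyi_div_def split: if_splits)
  then show "dominated P Q \<and> 0 < renyi_real \<rho> P Q"
    using adm renyi_div_eq_renyi_real[of P Q] by (auto simp: admissible_pair_def dominated_def)
qed (simp add: admissible_pair_def renyi_div_eq_renyi_real dominated_def)

lemma div_ratio_eq:
  assumes W: "is_channel W" and adm: "admissible_pair \<rho> P Q"
  shows "div_ratio \<rho> W P Q
    = ereal (renyi_real \<rho> (out_dist W P) (out_dist W Q) / renyi_real \<rho> P Q)"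
  using adm dominated_out_dist[OF W]
  by (simp add: admissible_pair_iff div_ratio_def renyi_div_eq_renyi_real)

lemma div_ratio_le_of_binary:
  fixes W :: "'x::finite \<Rightarrow> 'y::finite \<Rightarrow> real" and P Q :: "'x \<Rightarrow> real" and \<eta> :: ereal
  assumes W: "is_channel W" and \<rho>: "1 \<le> \<rho>" and adm: "admissible_pair \<rho> P Q"
    and binary: "\<And>P' Q'. admissible_pair \<rho> P' Q' \<Longrightarrow>
      \<exists>S. card S \<le> 2 \<and> supp P' \<subseteq> S \<and> supp Q' \<subseteq> S \<Longrightarrow> div_ratio \<rho> W P' Q' \<le> \<eta>"
  shows "div_ratio \<rho> W P Q \<le> \<eta>"
proof -
  have ratio_nonneg: "0 \<le> div_ratio \<rho> W P' Q'" if "admissible_pair \<rho> P' Q'" for P' Q'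
    using that renyi_real_nonneg[OF dominated_out_dist[OF W] \<rho>]
    by (simp add: div_ratio_eq[OF W] admissible_pair_iff)
  obtain P' Q' :: "'x \<Rightarrow> real" where "binary_pair P' Q'" "0 < renyi_real \<rho> P' Q'"
    using exists_binary_pair_renyi_pos[of P Q \<rho>] adm \<rho> by (auto simp: admissible_pair_iff)
  then have "0 \<le> \<eta>"
    using binary[of P' Q'] ratio_nonneg[of P' Q']
    by (force simp: admissible_pair_iff binary_pair_def)
  then show ?thesis
  proof (cases \<eta>)
    case (real c)
    have "renyi_real \<rho> (out_dist W P) (out_dist W Q) \<le> c * renyi_real \<rho> P Q"
    proof (rule renyi_real_out_le_of_binary[OF W \<rho>])
      show "0 \<le> c" using \<open>0 \<le> \<eta>\<close> real by simp
      fix P' Q' :: "'x \<Rightarrow> real"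
      assume "binary_pair P' Q'" and pos: "0 < renyi_real \<rho> P' Q'"
      then have "div_ratio \<rho> W P' Q' \<le> ereal c"
        using binary real by (auto simp: admissible_pair_iff binary_pair_def)
      then show "renyi_real \<rho> (out_dist W P') (out_dist W Q') \<le> c * renyi_real \<rho> P' Q'"
        using pos \<open>binary_pair P' Q'\<close>
        by (simp add: div_ratio_eq[OF W] admissible_pair_iff binary_pair_def pos_divide_le_eq)
    qed (use adm in \<open>simp add: admissible_pair_iff\<close>)
    then show ?thesis
      using adm real by (simp add: div_ratio_eq[OF W] admissible_pair_iff pos_divide_le_eq)
  qed auto
qed

theorem theorem4p2:
  fixes W :: "'x::finite \<Rightarrow> 'y::finite \<Rightarrow> real" and \<rho> :: ereal
  assumes "is_channel W" and "1 \<le> \<rho>"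
  shows "sdpi_coeff \<rho> W =
    (SUP (P0, P1) \<in> {(P0, P1). admissible_pair \<rho> P0 P1 \<and>
        (\<exists>S. card S \<le> 2 \<and> supp P0 \<subseteq> S \<and> supp P1 \<subseteq> S)}.
       div_ratio \<rho> W P0 P1)"
proof -
  define B where "B = {(P0, P1 :: 'x \<Rightarrow> real). admissible_pair \<rho> P0 P1 \<and>
    (\<exists>S. card S \<le> 2 \<and> supp P0 \<subseteq> S \<and> supp P1 \<subseteq> S)}"
  have "div_ratio \<rho> W P' Q' \<le> (SUP (P0, P1) \<in> B. div_ratio \<rho> W P0 P1)"
    if "(P', Q') \<in> B" for P' Q'
    using SUP_upper[OF that, of "\<lambda>(P0, P1). div_ratio \<rho> W P0 P1"] by simp
  then have "div_ratio \<rho> W P Q \<le> (SUP (P0, P1) \<in> B. div_ratio \<rho> W P0 P1)"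
    if "admissible_pair \<rho> P Q" for P Q
    using div_ratio_le_of_binary[OF assms that] by (auto simp: B_def)
  then show ?thesis
    unfolding sdpi_coeff_def B_def[symmetric]
    by (intro antisym SUP_least SUP_subset_mono) (auto simp: B_def)
qed

end
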